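(* Let $U\in\mathbb{R}^{n\times d}$, $\mathbf{y}\in\mathbb{R}^n$, $\mathbf{x}_t\in\mathbb{R}^d$, $\lambda_t>0$, and \[ \mathbf{x}_{t+1}=\arg\min_{\mathbf{x}\in\mathbb{R}^d}\frac12\left\|\mathbf{x}-\big(\mathbf{x}_t-U^\top(U\mathbf{x}_t-\mathbf{y})\big)\right\|_2^2+\lambda_t\|\mathbf{x}\|_1 . \] Then for any $s$-sparse vector $\mathbf{x}\in\mathbb{R}^d$, \[ \|\mathbf{x}_{t+1}-\mathbf{x}\|_2^2\le\lambda_t\sqrt s\|\mathbf{x}_{t+1}-\mathbf{x}\|_2+\left|(\mathbf{x}_{t+1}-\mathbf{x})^\top\big(U^\top(U\mathbf{x}_t-\mathbf{y})-(\mathbf{x}_t-\mathbf{x})\big)\right| . \]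
   Context: A vector is $s$-sparse if it has at most $s$ nonzero entries. *)

theory Defs
  imports "HOL-Analysis.Analysis"
begin

definition l1norm :: "real ^ 'd \<Rightarrow> real" where
  "l1norm x = (\<Sum>i\<in>UNIV. \<bar>x $ i\<bar>)"

definition sparse :: "nat \<Rightarrow> real ^ 'd \<Rightarrow> bool" where
  "sparse s x \<longleftrightarrow> card {i. x $ i \<noteq> 0} \<le> s"

end

theory Submission
  imports Defs
begin

text \<open>
  The update is the proximal step of the convex function \<open>\<lambda> \<parallel>\<cdot>\<parallel>\<^sub>1\<close> at
  \<open>v = x\<^sub>t - U\<^sup>T(Ux\<^sub>t - y)\<close>. Its optimality condition, tested against \<open>x\<close>, reads
  \<open>(x\<^sub>t\<^sub>+\<^sub>1 - v)\<^sup>T(x\<^sub>t\<^sub>+\<^sub>1 - x) \<le> \<lambda> (\<parallel>x\<parallel>\<^sub>1 - \<parallel>x\<^sub>t\<^sub>+\<^sub>1\<parallel>\<^sub>1)\<close>. Splitting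
  \<open>x\<^sub>t\<^sub>+\<^sub>1 - v = (x\<^sub>t\<^sub>+\<^sub>1 - x) + (U\<^sup>T(Ux\<^sub>t - y) - (x\<^sub>t - x))\<close> turns the left side into
  \<open>\<parallel>x\<^sub>t\<^sub>+\<^sub>1 - x\<parallel>\<^sup>2\<close> plus the error term, and since \<open>x\<close> is \<open>s\<close>-sparse,
  \<open>\<parallel>x\<parallel>\<^sub>1 - \<parallel>x\<^sub>t\<^sub>+\<^sub>1\<parallel>\<^sub>1\<close> is at most the \<open>\<ell>\<^sub>1\<close>-norm of \<open>x\<^sub>t\<^sub>+\<^sub>1 - x\<close> on the
  support of \<open>x\<close>, hence by Cauchy-Schwarz at most \<open>\<surd>s \<parallel>x\<^sub>t\<^sub>+\<^sub>1 - x\<parallel>\<close>.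
\<close>

lemma convex_on_l1norm: "convex_on UNIV (l1norm :: real ^ 'd \<Rightarrow> real)"
proof (rule convex_onI)
  fix t :: real and a b :: "real ^ 'd"
  assume "0 < t" "t < 1"
  have "\<bar>(1 - t) * a $ i + t * b $ i\<bar> \<le> (1 - t) * \<bar>a $ i\<bar> + t * \<bar>b $ i\<bar>" for i
    using abs_triangle_ineq[of "(1 - t) * a $ i" "t * b $ i"] \<open>0 < t\<close> \<open>t < 1\<close>
    by (simp add: abs_mult)
  then have "l1norm ((1 - t) *\<^sub>R a + t *\<^sub>R b) \<le> (\<Sum>i\<in>UNIV. (1 - t) * \<bar>a $ i\<bar> + t * \<bar>b $ i\<bar>)"
    unfolding l1norm_def by (intro sum_mono) simp
  also have "\<dots> = (1 - t) * l1norm a + t * l1norm b"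
    unfolding l1norm_def by (simp add: sum.distrib sum_distrib_left)
  finally show "l1norm ((1 - t) *\<^sub>R a + t *\<^sub>R b) \<le> (1 - t) * l1norm a + t * l1norm b" .
qed simp

lemma l1norm_diff_le_sqrt_sparse:
  fixes x z :: "real ^ 'd"
  assumes "sparse s x"
  shows "l1norm x - l1norm z \<le> sqrt (real s) * norm (z - x)"
proof -
  define S where "S = {i. x $ i \<noteq> 0}"
  have card_S: "card S \<le> s" using assms unfolding sparse_def S_def .
  have "l1norm x - l1norm z = (\<Sum>i\<in>UNIV. \<bar>x $ i\<bar> - \<bar>z $ i\<bar>)"
    unfolding l1norm_def by (simp add: sum_subtractf)
  also have "\<dots> \<le> (\<Sum>i\<in>UNIV. if i \<in> S then \<bar>(z - x) $ i\<bar> else 0)"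
    by (rule sum_mono) (auto simp: S_def)
  also have "\<dots> = (\<Sum>i\<in>S. \<bar>(z - x) $ i\<bar> * \<bar>1\<bar>)"
    by (simp add: sum.If_cases)
  also have "\<dots> \<le> L2_set (\<lambda>i. (z - x) $ i) S * L2_set (\<lambda>i. 1) S"
    by (rule L2_set_mult_ineq)
  also have "\<dots> = L2_set (\<lambda>i. (z - x) $ i) S * sqrt (real (card S))"
    by (simp add: L2_set_constant)
  also have "\<dots> \<le> norm (z - x) * sqrt (real s)"
  proof (rule mult_mono)
    have "(\<Sum>i\<in>S. ((z - x) $ i)\<^sup>2) \<le> (\<Sum>i\<in>UNIV. ((z - x) $ i)\<^sup>2)"
      by (rule sum_mono2) auto
    then show "L2_set (\<lambda>i. (z - x) $ i) S \<le> norm (z - x)"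
      unfolding norm_vec_def L2_set_def by simp
    show "sqrt (real (card S)) \<le> sqrt (real s)" using card_S by simp
  qed auto
  finally show ?thesis by (simp add: mult.commute)
qed

text \<open>Compare \<open>p\<close> with the points \<open>(1 - t) p + t z\<close> of the segment and let \<open>t \<rightarrow> 0\<close>.\<close>

lemma prox_variational_inequality:
  fixes p v z :: "'a :: real_inner"
  assumes "convex_on UNIV h"
    and min: "\<And>w. (1/2) * (norm (p - v))\<^sup>2 + h p \<le> (1/2) * (norm (w - v))\<^sup>2 + h w"
  shows "(p - v) \<bullet> (p - z) \<le> h z - h p"
proof -
  define a where "a = (p - v) \<bullet> (p - z) - (h z - h p)"
  define c where "c = (norm (p - z))\<^sup>2"
  have scaled: "a \<le> t * c / 2" if t: "0 < t" "t \<le> 1" for t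
  proof -
    define w where "w = (1 - t) *\<^sub>R p + t *\<^sub>R z"
    have "w - v = (p - v) - t *\<^sub>R (p - z)" by (simp add: w_def algebra_simps)
    then have "(norm (w - v))\<^sup>2 = ((p - v) - t *\<^sub>R (p - z)) \<bullet> ((p - v) - t *\<^sub>R (p - z))"
      by (simp only: power2_norm_eq_inner)
    also have "\<dots> = (norm (p - v))\<^sup>2 - 2 * t * ((p - v) \<bullet> (p - z)) + t\<^sup>2 * c"
      unfolding c_def power2_norm_eq_inner
      by (simp add: inner_diff_left inner_diff_right inner_commute power2_eq_square algebra_simps)
    finally have "(norm (w - v))\<^sup>2 = (norm (p - v))\<^sup>2 - 2 * t * ((p - v) \<bullet> (p - z)) + t\<^sup>2 * c" .
    moreover have "h w \<le> (1 - t) * h p + t * h z"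
      using convex_onD[OF assms(1)] t by (simp add: w_def)
    ultimately have "t * a \<le> t * (t * c / 2)"
      using min[of w] unfolding a_def by (simp add: algebra_simps power2_eq_square)
    then show ?thesis using \<open>0 < t\<close> by simp
  qed
  have "a \<le> 0 + e" if "0 < e" for e
  proof -
    define t where "t = min 1 (e / (c + 1))"
    have "0 < c + 1" by (simp add: c_def add_nonneg_pos)
    then have "0 < t" "t \<le> 1" using \<open>0 < e\<close> by (auto simp: t_def)
    then have "a \<le> t * c / 2" by (rule scaled)
    also have "\<dots> \<le> t * c" using \<open>0 < t\<close> by (simp add: c_def)
    also have "\<dots> \<le> e / (c + 1) * c"
      by (intro mult_right_mono) (auto simp: t_def c_def)
    also have "\<dots> \<le> e" using \<open>0 < e\<close> \<open>0 < c + 1\<close> by (simp add: field_simps)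
    finally show ?thesis by simp
  qed
  then have "a \<le> 0" by (rule field_le_epsilon)
  then show ?thesis unfolding a_def by simp
qed

theorem lemma1:
  fixes U :: "real ^ 'd ^ 'n" and y :: "real ^ 'n" and xt xt1 x :: "real ^ 'd"
    and lam :: real and s :: nat
  assumes lam_pos: "lam > 0"
    and argmin: "is_arg_min (\<lambda>z. (1/2) * (norm (z - (xt - transpose U *v (U *v xt - y))))\<^sup>2
                              + lam * l1norm z) (\<lambda>_. True) xt1"
    and sp: "sparse s x"
  shows "(norm (xt1 - x))\<^sup>2 \<le> lam * sqrt (real s) * norm (xt1 - x)
           + \<bar>(xt1 - x) \<bullet> (transpose U *v (U *v xt - y) - (xt - x))\<bar>"
proof -
  define v where "v = xt - transpose U *v (U *v xt - y)"
  define e where "e = xt1 - x"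
  define r where "r = transpose U *v (U *v xt - y) - (xt - x)"
  have "(xt1 - v) \<bullet> (xt1 - x) \<le> lam * l1norm x - lam * l1norm xt1"
  proof (rule prox_variational_inequality)
    show "convex_on UNIV (\<lambda>z. lam * l1norm z)"
      using lam_pos convex_on_l1norm by (intro convex_on_cmul) auto
    show "(1/2) * (norm (xt1 - v))\<^sup>2 + lam * l1norm xt1 \<le> (1/2) * (norm (w - v))\<^sup>2 + lam * l1norm w"
      for w using argmin unfolding is_arg_min_def v_def by (metis not_less)
  qed
  moreover have "xt1 - v = e + r" by (simp add: v_def e_def r_def algebra_simps)
  ultimately have "(norm e)\<^sup>2 + e \<bullet> r \<le> lam * (l1norm x - l1norm xt1)"
    unfolding e_def[symmetric]
    by (simp add: inner_add_left inner_commute[of r e] power2_norm_eq_inner right_diff_distrib)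
  also have "\<dots> \<le> lam * (sqrt (real s) * norm e)"
    using l1norm_diff_le_sqrt_sparse[OF sp, of xt1] lam_pos by (simp add: e_def)
  finally show ?thesis
    unfolding e_def[symmetric] r_def[symmetric] by (smt (verit) abs_ge_minus_self mult.assoc)
qed

end
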